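(* Let $(V,\mathcal{E})$ be a forward neutral genealogy model. For each $n$, the random vector $(\mathcal{T}(v))_{v\in V_n}$ is exchangeable.
   Context: Data: $\tau\in\mathbb{N}\cup\{\infty\}$, positive integers $(X_n)_{n<\tau}$, vectors $k_n=(k_n(i))_{i=1}^{X_n}$ of nonnegative integers with $\sum_ik_n(i)=X_{n+1}$. $V_n=\{(n,i):1\le i\le X_n\}$. A genealogy model is a random edge set $\mathcal{E}\subset\bigcup_nV_n\times V_{n+1}$ such that each vertex of $V_{n+1}$ has exactly one parent in $V_n$ and the out-degrees in $V_n$ are a permutation of $k_n$. $\mathcal{E}_n=\mathcal{E}\cap(V_n\times V_{n+1})$, $K_n=(\mathrm{od}((n,i)))_i$. Forward neutral: for all $n$, $K_n$ is exchangeable and independent of $(\mathcal{E}_m)_{m<n}$. For $v\in V_n$, $D(v)$ is the set of vertices reachable from $v$ by a directed path in $\mathcal{E}$ (including $v$), and $\mathcal{T}(v)$ is the subgraph induced by $D(v)$, taken modulo isomorphism of directed graphs. *)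

theory Defs
  imports "HOL-Probability.Probability" "HOL-Library.Extended_Nat"
begin

type_synonym vertex = "nat \<times> nat"
type_synonym edges = "(vertex \<times> vertex) set"

definition gen :: "(nat \<Rightarrow> nat) \<Rightarrow> nat \<Rightarrow> vertex set" where
  "gen X n = {(n, i) | i. 1 \<le> i \<and> i \<le> X n}"

definition outdeg :: "edges \<Rightarrow> vertex \<Rightarrow> nat" where
  "outdeg E v = card {w. (v, w) \<in> E}"

definition genealogy :: "enat \<Rightarrow> (nat \<Rightarrow> nat) \<Rightarrow> (nat \<Rightarrow> nat \<Rightarrow> nat) \<Rightarrow> edges \<Rightarrow> bool" where
  "genealogy \<tau> X k E \<longleftrightarrow>
     E \<subseteq> (\<Union>n\<in>{n. enat (Suc n) < \<tau>}. gen X n \<times> gen X (Suc n)) \<and>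
     (\<forall>n. enat (Suc n) < \<tau> \<longrightarrow> (\<forall>w\<in>gen X (Suc n). \<exists>!u. (u, w) \<in> E)) \<and>
     (\<forall>n. enat (Suc n) < \<tau> \<longrightarrow>
        (\<exists>\<sigma>. \<sigma> permutes {1..X n} \<and> (\<forall>i\<in>{1..X n}. outdeg E (n, i) = k n (\<sigma> i))))"

definition edge_space :: "edges measure" where
  "edge_space = sigma UNIV (range (\<lambda>e. {E. e \<in> E}))"

definition edges_before :: "(nat \<Rightarrow> nat) \<Rightarrow> nat \<Rightarrow> edges \<Rightarrow> edges" where
  "edges_before X n E = E \<inter> (\<Union>m<n. gen X m \<times> gen X (Suc m))"

definition Kvec :: "(nat \<Rightarrow> nat) \<Rightarrow> nat \<Rightarrow> edges \<Rightarrow> nat \<Rightarrow> nat" where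
  "Kvec X n E = (\<lambda>i. if i \<in> {1..X n} then outdeg E (n, i) else 0)"

definition forward_neutral ::
  "'w measure \<Rightarrow> enat \<Rightarrow> (nat \<Rightarrow> nat) \<Rightarrow> ('w \<Rightarrow> edges) \<Rightarrow> bool" where
  "forward_neutral M \<tau> X \<E> \<longleftrightarrow>
     (\<forall>n. enat n < \<tau> \<longrightarrow>
        \<comment> \<open>K_n is exchangeable\<close>
        (\<forall>\<pi> \<kappa>. \<pi> permutes {1..X n} \<longrightarrow>
            measure M {\<omega>\<in>space M. Kvec X n (\<E> \<omega>) = \<kappa>}
          = measure M {\<omega>\<in>space M. (\<lambda>i. Kvec X n (\<E> \<omega>) (\<pi> i)) = \<kappa>}) \<and>
        \<comment> \<open>K_n is independent of (E_m)_{m<n}\<close>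
        (\<forall>\<kappa> S.
            measure M {\<omega>\<in>space M. Kvec X n (\<E> \<omega>) = \<kappa> \<and> edges_before X n (\<E> \<omega>) = S}
          = measure M {\<omega>\<in>space M. Kvec X n (\<E> \<omega>) = \<kappa>}
            * measure M {\<omega>\<in>space M. edges_before X n (\<E> \<omega>) = S}))"

definition desc :: "edges \<Rightarrow> vertex \<Rightarrow> vertex set" where
  "desc E v = {w. (v, w) \<in> E\<^sup>*}"

definition subtree :: "edges \<Rightarrow> vertex \<Rightarrow> vertex set \<times> edges" where
  "subtree E v = (desc E v, E \<inter> (desc E v \<times> desc E v))"

definition digraph_iso :: "('a set \<times> ('a \<times> 'a) set) \<Rightarrow> ('a set \<times> ('a \<times> 'a) set) \<Rightarrow> bool" where
  "digraph_iso G H \<longleftrightarrow> (\<exists>f. bij_betw f (fst G) (fst H) \<and>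
      (\<forall>x\<in>fst G. \<forall>y\<in>fst G. (x, y) \<in> snd G \<longleftrightarrow> (f x, f y) \<in> snd H))"

definition iso_class :: "('a set \<times> ('a \<times> 'a) set) \<Rightarrow> ('a set \<times> ('a \<times> 'a) set) set" where
  "iso_class G = {H. snd H \<subseteq> fst H \<times> fst H \<and> digraph_iso G H}"

definition tree_vec :: "(nat \<Rightarrow> nat) \<Rightarrow> nat \<Rightarrow> edges \<Rightarrow> vertex \<Rightarrow> (vertex set \<times> edges) set" where
  "tree_vec X n E = (\<lambda>v. if v \<in> gen X n then iso_class (subtree E v) else {})"

definition exchangeable_vec ::
  "'w measure \<Rightarrow> 'b measure \<Rightarrow> 'i set \<Rightarrow> ('b \<Rightarrow> 'i \<Rightarrow> 'v) \<Rightarrow> ('w \<Rightarrow> 'b) \<Rightarrow> bool" where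
  "exchangeable_vec M B I Y Z \<longleftrightarrow>
     (\<forall>\<pi> A. \<pi> permutes I \<longrightarrow>
        {b\<in>space B. Y b \<in> A} \<in> sets B \<longrightarrow>
        {b\<in>space B. (\<lambda>i. Y b (\<pi> i)) \<in> A} \<in> sets B \<longrightarrow>
        measure M {\<omega>\<in>space M. Y (Z \<omega>) \<in> A}
          = measure M {\<omega>\<in>space M. (\<lambda>i. Y (Z \<omega>) (\<pi> i)) \<in> A})"

end

theory Submission
  imports Defs
begin

(* Fix a permutation pi of generation n and let sigma be the induced permutation of indices.
   Relabel the genealogy below generation n one generation at a time: generation n by sigma,
   and every later generation by a permutation chosen so that the layer of edges above it
   becomes a fixed canonical bipartite graph that depends only on the out-degree vector of the
   (already relabelled) parents. The relabelled genealogy is isomorphic to the part of the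
   original one below generation n, the subtree of (n, i) going to the subtree of (n, sigma i),
   so its vector of subtree classes is the original vector composed with pi. On the other hand
   it is determined by the sequence of relabelled out-degree vectors. The out-degree vector of
   generation n + k is exchangeable and independent of the earlier generations, while the
   permutation relabelling it is a function of those earlier generations; hence this sequence,
   and with it the relabelled genealogy, has a law that does not depend on pi. Comparing pi with
   the identity gives exchangeability. *)

section \<open>Edge sets as a measurable space\<close>

lemma sets_edge_space: "sets edge_space = sigma_sets UNIV (range (\<lambda>e. {E. e \<in> E}))"
  unfolding edge_space_def by (rule sets_measure_of) auto

lemma space_edge_space [simp]: "space edge_space = UNIV"
  unfolding edge_space_def by (rule space_measure_of) auto

lemma pred_edge_space_mem [measurable]: "Measurable.pred edge_space (\<lambda>b. e \<in> b)"
  unfolding pred_def sets_edge_space by (auto intro: sigma_sets.Basic)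

lemma sets_edge_space_finitely_determined:
  assumes "finite U"
  shows "{b. P (b \<inter> U)} \<in> sets edge_space"
proof -
  have cell: "{b. b \<inter> U = T} \<in> sets edge_space" if "T \<subseteq> U" for T
  proof -
    have "{b. b \<inter> U = T} = {b \<in> space edge_space. \<forall>e\<in>U. e \<in> b \<longleftrightarrow> e \<in> T}"
      using that by auto
    also have "\<dots> \<in> sets edge_space"
      using assms by measurable
    finally show ?thesis .
  qed
  have "{b. P (b \<inter> U)} = (\<Union>T\<in>{T. T \<subseteq> U \<and> P T}. {b. b \<inter> U = T})"
    by auto
  then show ?thesis
    using assms cell by auto
qed

lemma sets_edge_space_eq_cylinders:
  "sets edge_space = sigma_sets UNIV ((\<lambda>F :: edges. {b. F \<subseteq> b}) ` {F. finite F})"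
  unfolding sets_edge_space
proof (rule sigma_sets_eqI)
  fix A :: "edges set" assume "A \<in> range (\<lambda>e. {E. e \<in> E})"
  then obtain e where "A = {b. {e} \<subseteq> b}"
    by auto
  then have "A \<in> (\<lambda>F. {b. F \<subseteq> b}) ` {F. finite F}"
    by blast
  then show "A \<in> sigma_sets UNIV ((\<lambda>F. {b. F \<subseteq> b}) ` {F. finite F})"
    by (rule sigma_sets.Basic)
next
  fix A :: "edges set" assume "A \<in> (\<lambda>F. {b. F \<subseteq> b}) ` {F. finite F}"
  then obtain F where "finite F" "A = {b. F \<subseteq> b \<inter> F}"
    by auto
  then show "A \<in> sigma_sets UNIV (range (\<lambda>e. {E. e \<in> E}))"
    using sets_edge_space_finitely_determined[of F "\<lambda>c. F \<subseteq> c"] sets_edge_space by simp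
qed

lemma edge_space_eqI:
  assumes "prob_space P" "prob_space Q" "sets P = sets edge_space" "sets Q = sets edge_space"
    and "\<And>F. finite F \<Longrightarrow> measure P {b. F \<subseteq> b} = measure Q {b. F \<subseteq> b}"
  shows "P = Q"
proof (rule measure_eqI_generator_eq[where A="\<lambda>_. UNIV"])
  interpret P: prob_space P by fact
  interpret Q: prob_space Q by fact
  let ?G = "(\<lambda>F :: edges. {b. F \<subseteq> b}) ` {F. finite F}"
  show "Int_stable ?G"
  proof (rule Int_stableI)
    fix A B :: "edges set" assume "A \<in> ?G" "B \<in> ?G"
    then obtain F H where "finite F" "finite H" "A = {b. F \<subseteq> b}" "B = {b. H \<subseteq> b}"
      by blast
    then show "A \<inter> B \<in> ?G"
      by (auto intro!: image_eqI[where x="F \<union> H"])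
  qed
  show "sets P = sigma_sets UNIV ?G" "sets Q = sigma_sets UNIV ?G"
    using assms(3,4) sets_edge_space_eq_cylinders by simp_all
  show "emeasure P A = emeasure Q A" if "A \<in> ?G" for A
    using that assms(5) P.emeasure_eq_measure Q.emeasure_eq_measure by auto
  show "range (\<lambda>_. UNIV) \<subseteq> ?G"
    by (auto intro!: image_eqI[where x="{}"])
  show "emeasure P UNIV \<noteq> \<infinity>" for i :: nat
    by simp
qed auto

lemma measurable_edge_spaceI:
  assumes "\<And>e. \<exists>U. finite U \<and> (\<forall>b. e \<in> f b \<longleftrightarrow> e \<in> f (b \<inter> U))"
  shows "f \<in> edge_space \<rightarrow>\<^sub>M edge_space"
proof -
  have "f \<in> edge_space \<rightarrow>\<^sub>M sigma UNIV (range (\<lambda>e. {E. e \<in> E}))"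
  proof (rule measurable_measure_of)
    fix A :: "edges set" assume "A \<in> range (\<lambda>e. {E. e \<in> (E :: edges)})"
    then obtain e where A: "A = {E. e \<in> E}" by blast
    obtain U where "finite U" "\<And>b. e \<in> f b \<longleftrightarrow> e \<in> f (b \<inter> U)"
      using assms by blast
    then show "f -` A \<inter> space edge_space \<in> sets edge_space"
      using sets_edge_space_finitely_determined[of U "\<lambda>c. e \<in> f c"] by (simp add: A vimage_def)
  qed auto
  then show ?thesis
    unfolding edge_space_def .
qed

section \<open>Generations and layers\<close>

lemma mem_gen [simp]: "(a, i) \<in> gen X m \<longleftrightarrow> a = m \<and> i \<in> {1..X m}"
  unfolding gen_def by auto

lemma gen_eq_image: "gen X m = Pair m ` {1..X m}"
  unfolding gen_def by auto

lemma finite_gen [simp]: "finite (gen X m)"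
  by (simp add: gen_eq_image)

lemma card_gen [simp]: "card (gen X m) = X m"
  by (simp add: gen_eq_image card_image inj_on_def)

definition layer :: "(nat \<Rightarrow> nat) \<Rightarrow> nat \<Rightarrow> edges \<Rightarrow> edges" where
  "layer X m b = b \<inter> (gen X m \<times> gen X (Suc m))"

lemma layer_edges_before: "m < N \<Longrightarrow> layer X m (edges_before X N b) = layer X m b"
  unfolding layer_def edges_before_def by auto

lemma genealogy_edge:
  assumes "genealogy \<tau> X d b" and "e \<in> b"
  obtains m i j where "e = ((m, i), (Suc m, j))" "enat (Suc m) < \<tau>"
    "i \<in> {1..X m}" "j \<in> {1..X (Suc m)}"
proof -
  have "e \<in> (\<Union>n\<in>{n. enat (Suc n) < \<tau>}. gen X n \<times> gen X (Suc n))"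
    using assms unfolding genealogy_def by blast
  then show ?thesis
    using that by (auto simp: gen_def)
qed

lemma genealogy_rtrancl_level:
  assumes "genealogy \<tau> X d b" and "(v, w) \<in> b\<^sup>*"
  shows "fst v \<le> fst w"
  using assms(2)
proof (induction rule: rtrancl_induct)
  case (step y z)
  then show ?case
    by (elim genealogy_edge[OF assms(1)]) auto
qed simp

lemma genealogy_layer_empty:
  assumes "genealogy \<tau> X d b" and "\<not> enat (Suc m) < \<tau>"
  shows "layer X m b = {}"
proof -
  have "e \<notin> layer X m b" if "e \<in> b" for e
    using that assms(2) by (elim genealogy_edge[OF assms(1)]) (auto simp: layer_def)
  then show ?thesis
    unfolding layer_def by blast
qed

lemma genealogy_Kvec_layer:
  assumes "genealogy \<tau> X d b"
  shows "Kvec X m (layer X m b) = Kvec X m b"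
proof -
  have "((m, i), w) \<in> layer X m b \<longleftrightarrow> ((m, i), w) \<in> b" if "i \<in> {1..X m}" for i w
    using that by (auto simp: layer_def elim: genealogy_edge[OF assms])
  then have "outdeg (layer X m b) (m, i) = outdeg b (m, i)" if "i \<in> {1..X m}" for i
    using that unfolding outdeg_def by simp
  then show ?thesis
    unfolding Kvec_def by (auto intro!: ext)
qed

lemma genealogy_Kvec_beyond:
  assumes "genealogy \<tau> X d b" and "\<not> enat (Suc m) < \<tau>"
  shows "Kvec X m b = (\<lambda>_. 0)"
proof -
  have "Kvec X m b = Kvec X m (layer X m b)"
    using genealogy_Kvec_layer[OF assms(1)] by simp
  also have "\<dots> = (\<lambda>_. 0)"
    unfolding genealogy_layer_empty[OF assms] by (auto simp: Kvec_def outdeg_def)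
  finally show ?thesis .
qed

definition parent_edges :: "(nat \<Rightarrow> nat) \<Rightarrow> nat \<Rightarrow> (nat \<Rightarrow> nat) \<Rightarrow> edges" where
  "parent_edges X m par = (\<lambda>j. ((m, par j), (Suc m, j))) ` {1..X (Suc m)}"

definition layer_graph :: "(nat \<Rightarrow> nat) \<Rightarrow> nat \<Rightarrow> (nat \<Rightarrow> nat) \<Rightarrow> edges \<Rightarrow> bool" where
  "layer_graph X m \<delta> L \<longleftrightarrow> (\<exists>par. par ` {1..X (Suc m)} \<subseteq> {1..X m} \<and>
     (\<forall>i\<in>{1..X m}. card {j \<in> {1..X (Suc m)}. par j = i} = \<delta> i) \<and> L = parent_edges X m par)"

definition relabel_layer :: "(nat \<Rightarrow> nat) \<Rightarrow> (nat \<Rightarrow> nat) \<Rightarrow> edges \<Rightarrow> edges" where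
  "relabel_layer p q L = map_prod (apsnd p) (apsnd q) ` L"

lemma outdeg_parent_edges:
  "outdeg (parent_edges X m par) (m, i) = card {j \<in> {1..X (Suc m)}. par j = i}"
proof -
  have "{w. ((m, i), w) \<in> parent_edges X m par} = Pair (Suc m) ` {j \<in> {1..X (Suc m)}. par j = i}"
    unfolding parent_edges_def by auto
  then show ?thesis
    unfolding outdeg_def by (simp add: card_image inj_on_def)
qed

lemma genealogy_layer_eq_parent_edges:
  assumes b: "genealogy \<tau> X d b" and m: "enat (Suc m) < \<tau>"
  obtains par where "par ` {1..X (Suc m)} \<subseteq> {1..X m}" and "layer X m b = parent_edges X m par"
proof -
  have unique: "\<exists>!u. (u, (Suc m, j)) \<in> b" if "j \<in> {1..X (Suc m)}" for j
    using b m that unfolding genealogy_def by simp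
  have "\<exists>i\<in>{1..X m}. ((m, i), (Suc m, j)) \<in> b" if j: "j \<in> {1..X (Suc m)}" for j
  proof -
    obtain u where u: "(u, (Suc m, j)) \<in> b"
      using unique[OF j] by blast
    show ?thesis
      by (rule genealogy_edge[OF b u]) (use u in auto)
  qed
  then obtain par where par: "\<And>j. j \<in> {1..X (Suc m)} \<Longrightarrow> par j \<in> {1..X m}"
      "\<And>j. j \<in> {1..X (Suc m)} \<Longrightarrow> ((m, par j), (Suc m, j)) \<in> b"
    by metis
  have "layer X m b \<subseteq> parent_edges X m par"
  proof
    fix e assume "e \<in> layer X m b"
    then obtain i j where e: "e = ((m, i), (Suc m, j))" "j \<in> {1..X (Suc m)}" "e \<in> b"
      unfolding layer_def gen_def by auto
    then have "i = par j"
      using unique[OF e(2)] par(2)[OF e(2)] by auto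
    with e show "e \<in> parent_edges X m par"
      unfolding parent_edges_def by auto
  qed
  moreover have "parent_edges X m par \<subseteq> layer X m b"
    using par unfolding parent_edges_def layer_def by auto
  ultimately show ?thesis
    using that par(1) by blast
qed

lemma genealogy_layer_graph:
  assumes "genealogy \<tau> X d b" and "enat (Suc m) < \<tau>"
  shows "layer_graph X m (Kvec X m (layer X m b)) (layer X m b)"
proof -
  obtain par where par: "par ` {1..X (Suc m)} \<subseteq> {1..X m}" and L: "layer X m b = parent_edges X m par"
    using genealogy_layer_eq_parent_edges[OF assms] .
  have "card {j \<in> {1..X (Suc m)}. par j = i} = Kvec X m (layer X m b) i" if "i \<in> {1..X m}" for i
    using that outdeg_parent_edges unfolding Kvec_def L by simp
  with par L show ?thesis
    unfolding layer_graph_def by blast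
qed

lemma relabel_layer_relabel_layer:
  "relabel_layer p' q' (relabel_layer p q L) = relabel_layer (p' \<circ> p) (q' \<circ> q) L"
proof -
  have "map_prod (apsnd p') (apsnd q') (map_prod (apsnd p) (apsnd q) e)
      = map_prod (apsnd (p' \<circ> p)) (apsnd (q' \<circ> q)) e" for e
    by (cases e) (simp add: apsnd_compose)
  then show ?thesis
    unfolding relabel_layer_def image_image by (rule image_cong[OF refl])
qed

lemma relabel_layer_level:
  assumes "e \<in> relabel_layer p q (layer X m b)"
  shows "fst (fst e) = m"
  using assms unfolding relabel_layer_def layer_def gen_def by auto

lemma relabel_parent_edges:
  assumes "q permutes {1..X (Suc m)}"
  shows "relabel_layer p q (parent_edges X m par) = parent_edges X m (p \<circ> par \<circ> inv q)"
proof -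
  have "relabel_layer p q (parent_edges X m par)
      = (\<lambda>j. ((m, p (par (inv q j))), (Suc m, j))) ` (q ` {1..X (Suc m)})"
    unfolding relabel_layer_def parent_edges_def image_image
    using permutes_inverses(2)[OF assms] by simp
  then show ?thesis
    unfolding parent_edges_def permutes_image[OF assms] by simp
qed

lemma parent_edges_cong:
  "(\<And>j. j \<in> {1..X (Suc m)} \<Longrightarrow> f j = g j) \<Longrightarrow> parent_edges X m f = parent_edges X m g"
  unfolding parent_edges_def by (rule image_cong) auto

lemma layer_graph_relabel_parents:
  assumes "layer_graph X m \<delta> L" and p: "p permutes {1..X m}"
  shows "layer_graph X m (\<delta> \<circ> inv p) (relabel_layer p id L)"
proof -
  obtain par where par: "par ` {1..X (Suc m)} \<subseteq> {1..X m}"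
      "\<And>i. i \<in> {1..X m} \<Longrightarrow> card {j \<in> {1..X (Suc m)}. par j = i} = \<delta> i"
      and L: "L = parent_edges X m par"
    using assms(1) unfolding layer_graph_def by blast
  have "(p \<circ> par) ` {1..X (Suc m)} \<subseteq> {1..X m}"
    using par(1) permutes_image[OF p] by (auto simp: image_comp[symmetric])
  moreover have "card {j \<in> {1..X (Suc m)}. (p \<circ> par) j = i} = (\<delta> \<circ> inv p) i"
    if "i \<in> {1..X m}" for i
  proof -
    have "(p \<circ> par) j = i \<longleftrightarrow> par j = inv p i" for j
      using permutes_inverses[OF p] by auto
    then show ?thesis
      using par(2)[of "inv p i"] permutes_in_image[OF permutes_inv[OF p]] that by simp
  qed
  moreover have "relabel_layer p id L = parent_edges X m (p \<circ> par)"
    using relabel_parent_edges[OF permutes_id] unfolding L by simp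
  ultimately show ?thesis
    unfolding layer_graph_def by blast
qed

lemma permutes_fibres:
  assumes "finite Y" and "\<And>i. card {y \<in> Y. f y = i} = card {y \<in> Y. g y = i}"
  shows "\<exists>q. q permutes Y \<and> (\<forall>y\<in>Y. g (q y) = f y)"
proof -
  have "\<forall>i. \<exists>h. bij_betw h {y \<in> Y. f y = i} {y \<in> Y. g y = i}"
    using assms by (auto intro: finite_same_card_bij)
  then obtain h where h: "\<And>i. bij_betw (h i) {y \<in> Y. f y = i} {y \<in> Y. g y = i}"
    by metis
  define q where "q y = (if y \<in> Y then h (f y) y else y)" for y
  have q: "q y \<in> Y \<and> g (q y) = f y" if "y \<in> Y" for y
    using h[of "f y"] that by (auto simp: q_def bij_betw_def)
  have "inj_on q Y"
  proof (rule inj_onI)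
    fix y z assume yz: "y \<in> Y" "z \<in> Y" "q y = q z"
    then have "f y = f z"
      using q by metis
    then show "y = z"
      using h[of "f y"] yz by (auto simp: q_def bij_betw_def dest: inj_onD)
  qed
  moreover have "q ` Y = Y"
    using q assms(1) \<open>inj_on q Y\<close> by (intro endo_inj_surj) auto
  ultimately have "q permutes Y"
    by (intro bij_imp_permutes) (auto simp: bij_betw_def q_def)
  with q show ?thesis
    by blast
qed

lemma layer_graph_unique_up_to_children:
  assumes "layer_graph X m \<delta> L1" and "layer_graph X m \<delta> L2"
  shows "\<exists>q. q permutes {1..X (Suc m)} \<and> relabel_layer id q L1 = L2"
proof -
  obtain par1 where par1: "par1 ` {1..X (Suc m)} \<subseteq> {1..X m}"
      "\<And>i. i \<in> {1..X m} \<Longrightarrow> card {j \<in> {1..X (Suc m)}. par1 j = i} = \<delta> i"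
      and L1: "L1 = parent_edges X m par1"
    using assms(1) unfolding layer_graph_def by blast
  obtain par2 where par2: "par2 ` {1..X (Suc m)} \<subseteq> {1..X m}"
      "\<And>i. i \<in> {1..X m} \<Longrightarrow> card {j \<in> {1..X (Suc m)}. par2 j = i} = \<delta> i"
      and L2: "L2 = parent_edges X m par2"
    using assms(2) unfolding layer_graph_def by blast
  have "card {j \<in> {1..X (Suc m)}. par1 j = i} = card {j \<in> {1..X (Suc m)}. par2 j = i}" for i
  proof (cases "i \<in> {1..X m}")
    case False
    then have "{j \<in> {1..X (Suc m)}. par1 j = i} = {}" "{j \<in> {1..X (Suc m)}. par2 j = i} = {}"
      using par1(1) par2(1) by blast+
    then show ?thesis
      by (simp only:)
  qed (metis par1(2) par2(2))
  then obtain q where q: "q permutes {1..X (Suc m)}" "\<forall>j\<in>{1..X (Suc m)}. par2 (q j) = par1 j"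
    using permutes_fibres[of "{1..X (Suc m)}"] by blast
  have "(id \<circ> par1 \<circ> inv q) j = par2 j" if "j \<in> {1..X (Suc m)}" for j
    using q(2) permutes_inverses(1)[OF q(1)] permutes_in_image[OF permutes_inv[OF q(1)]] that
    by (metis comp_apply id_apply)
  then have "relabel_layer id q L1 = L2"
    unfolding L1 L2 relabel_parent_edges[of q X m, OF q(1)] by (rule parent_edges_cong)
  with q(1) show ?thesis
    by blast
qed

section \<open>Descendant subtrees\<close>

lemma digraph_iso_sym:
  assumes "digraph_iso G H"
  shows "digraph_iso H G"
proof -
  obtain f where f: "bij_betw f (fst G) (fst H)"
      "\<forall>x\<in>fst G. \<forall>y\<in>fst G. (x, y) \<in> snd G \<longleftrightarrow> (f x, f y) \<in> snd H"
    using assms unfolding digraph_iso_def by blast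
  let ?g = "inv_into (fst G) f"
  have "bij_betw ?g (fst H) (fst G)"
    using f(1) by (rule bij_betw_inv_into)
  moreover have "(x, y) \<in> snd H \<longleftrightarrow> (?g x, ?g y) \<in> snd G" if "x \<in> fst H" "y \<in> fst H" for x y
    using f that by (auto simp: bij_betw_def f_inv_into_f inv_into_into)
  ultimately show ?thesis
    unfolding digraph_iso_def by blast
qed

lemma digraph_iso_trans:
  assumes "digraph_iso G H" and "digraph_iso H K"
  shows "digraph_iso G K"
proof -
  obtain f where f: "bij_betw f (fst G) (fst H)"
      "\<forall>x\<in>fst G. \<forall>y\<in>fst G. (x, y) \<in> snd G \<longleftrightarrow> (f x, f y) \<in> snd H"
    using assms(1) unfolding digraph_iso_def by blast
  obtain g where g: "bij_betw g (fst H) (fst K)"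
      "\<forall>x\<in>fst H. \<forall>y\<in>fst H. (x, y) \<in> snd H \<longleftrightarrow> (g x, g y) \<in> snd K"
    using assms(2) unfolding digraph_iso_def by blast
  have "bij_betw (g \<circ> f) (fst G) (fst K)"
    using f(1) g(1) by (rule bij_betw_trans)
  moreover have "(x, y) \<in> snd G \<longleftrightarrow> ((g \<circ> f) x, (g \<circ> f) y) \<in> snd K"
    if "x \<in> fst G" "y \<in> fst G" for x y
    using f g that by (simp add: bij_betw_apply)
  ultimately show ?thesis
    unfolding digraph_iso_def by blast
qed

lemma iso_class_eq: "digraph_iso G H \<Longrightarrow> iso_class G = iso_class H"
  unfolding iso_class_def using digraph_iso_sym digraph_iso_trans by blast

lemma rtrancl_map_prod:
  assumes "(u, w) \<in> E\<^sup>*"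
  shows "(f u, f w) \<in> (map_prod f f ` E)\<^sup>*"
  using assms
proof (induction rule: rtrancl_induct)
  case (step y z)
  then have "(f y, f z) \<in> map_prod f f ` E"
    by force
  with step.IH show ?case
    by (rule rtrancl_into_rtrancl)
qed simp

lemma rtrancl_map_prod_iff:
  assumes "bij f"
  shows "(f u, f w) \<in> (map_prod f f ` E)\<^sup>* \<longleftrightarrow> (u, w) \<in> E\<^sup>*"
proof
  assume "(f u, f w) \<in> (map_prod f f ` E)\<^sup>*"
  then have "(inv f (f u), inv f (f w)) \<in> (map_prod (inv f) (inv f) ` map_prod f f ` E)\<^sup>*"
    by (rule rtrancl_map_prod)
  moreover have "map_prod (inv f) (inv f) ` map_prod f f ` E = E"
    using bij_is_inj[OF assms] by (force simp: image_image)
  ultimately show "(u, w) \<in> E\<^sup>*"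
    using bij_is_inj[OF assms] by simp
qed (rule rtrancl_map_prod)

lemma desc_map_prod:
  assumes "bij f"
  shows "desc (map_prod f f ` E) (f v) = f ` desc E v"
proof -
  have "x \<in> desc (map_prod f f ` E) (f v) \<longleftrightarrow> x \<in> f ` desc E v" for x
    using rtrancl_map_prod_iff[OF assms, of v "inv f x" E] bij_inv_eq_iff[OF assms]
    unfolding desc_def by (metis (mono_tags) assms bij_pointE image_iff mem_Collect_eq)
  then show ?thesis
    by blast
qed

lemma subtree_map_prod_iso:
  assumes "bij f"
  shows "digraph_iso (subtree E v) (subtree (map_prod f f ` E) (f v))"
  unfolding digraph_iso_def subtree_def fst_conv snd_conv desc_map_prod[OF assms]
proof (intro exI conjI ballI)
  show "bij_betw f (desc E v) (f ` desc E v)"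
    using assms by (simp add: bij_betw_subset)
  show "(x, y) \<in> E \<inter> desc E v \<times> desc E v \<longleftrightarrow>
      (f x, f y) \<in> map_prod f f ` E \<inter> f ` desc E v \<times> f ` desc E v" for x y
    using bij_is_inj[OF assms] by (auto simp: inj_eq)
qed

lemma subtree_restrict_levels:
  assumes b: "genealogy \<tau> X d b" and v: "n \<le> fst v"
  shows "subtree {e \<in> b. n \<le> fst (fst e)} v = subtree b v"
proof -
  let ?b = "{e \<in> b. n \<le> fst (fst e)}"
  have "(v, w) \<in> ?b\<^sup>*" if "(v, w) \<in> b\<^sup>*" for w
    using that
  proof (induction rule: rtrancl_induct)
    case (step y z)
    then have "(y, z) \<in> ?b"
      using genealogy_rtrancl_level[OF b step(1)] v by simp
    with step.IH show ?case
      by (rule rtrancl_into_rtrancl)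
  qed simp
  then have desc: "desc ?b v = desc b v"
    unfolding desc_def using rtrancl_mono[of ?b b] by blast
  have "n \<le> fst w" if "w \<in> desc b v" for w
    using that genealogy_rtrancl_level[OF b, of v w] v unfolding desc_def by simp
  then have "?b \<inter> desc b v \<times> desc b v = b \<inter> desc b v \<times> desc b v"
    by auto
  then show ?thesis
    unfolding subtree_def desc by simp
qed

section \<open>Canonical relabelling\<close>

(* The SOME is junk when no layer graph with out-degrees delta exists; for the degree vectors
   of a genealogy one always does (canonizes_exists). *)
definition canon_layer :: "enat \<Rightarrow> (nat \<Rightarrow> nat) \<Rightarrow> nat \<Rightarrow> (nat \<Rightarrow> nat) \<Rightarrow> edges" where
  "canon_layer \<tau> X m \<delta> = (if enat (Suc m) < \<tau> then SOME L. layer_graph X m \<delta> L else {})"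

definition canonizes :: "enat \<Rightarrow> (nat \<Rightarrow> nat) \<Rightarrow> nat \<Rightarrow> (nat \<Rightarrow> nat) \<Rightarrow> edges \<Rightarrow> (nat \<Rightarrow> nat) \<Rightarrow> bool" where
  "canonizes \<tau> X m p b q \<longleftrightarrow> q permutes {1..X (Suc m)} \<and>
     relabel_layer p q (layer X m b) = canon_layer \<tau> X m (Kvec X m (layer X m b) \<circ> inv p)"

lemma canonizes_exists:
  assumes b: "genealogy \<tau> X d b" and p: "p permutes {1..X m}"
  shows "\<exists>q. canonizes \<tau> X m p b q"
proof (cases "enat (Suc m) < \<tau>")
  case True
  let ?\<delta> = "Kvec X m (layer X m b) \<circ> inv p"
  have L: "layer_graph X m ?\<delta> (relabel_layer p id (layer X m b))"
    using layer_graph_relabel_parents[OF genealogy_layer_graph[OF b True] p] .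
  then have "layer_graph X m ?\<delta> (canon_layer \<tau> X m ?\<delta>)"
    unfolding canon_layer_def using True by (auto intro: someI)
  then obtain q where "q permutes {1..X (Suc m)}"
      "relabel_layer id q (relabel_layer p id (layer X m b)) = canon_layer \<tau> X m ?\<delta>"
    using layer_graph_unique_up_to_children[OF L] by blast
  then show ?thesis
    unfolding canonizes_def relabel_layer_relabel_layer by auto
next
  case False
  then show ?thesis
    unfolding canonizes_def canon_layer_def genealogy_layer_empty[OF b False]
    by (auto simp: relabel_layer_def intro: permutes_id)
qed

(* The fallback id keeps canon_perm a permutation on arbitrary edge sets, as the law computation
   evaluates it on every possible past. *)
definition canon_child_perm :: "enat \<Rightarrow> (nat \<Rightarrow> nat) \<Rightarrow> nat \<Rightarrow> (nat \<Rightarrow> nat) \<Rightarrow> edges \<Rightarrow> nat \<Rightarrow> nat" where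
  "canon_child_perm \<tau> X m p b =
     (if \<exists>q. canonizes \<tau> X m p b q then SOME q. canonizes \<tau> X m p b q else id)"

lemma canon_child_perm_canonizes:
  assumes "\<exists>q. canonizes \<tau> X m p b q"
  shows "canonizes \<tau> X m p b (canon_child_perm \<tau> X m p b)"
proof -
  have "canon_child_perm \<tau> X m p b = (SOME q. canonizes \<tau> X m p b q)"
    using assms unfolding canon_child_perm_def by simp
  with someI_ex[OF assms] show ?thesis
    by simp
qed

lemma canon_child_perm_permutes: "canon_child_perm \<tau> X m p b permutes {1..X (Suc m)}"
proof (cases "\<exists>q. canonizes \<tau> X m p b q")
  case True
  then show ?thesis
    using canon_child_perm_canonizes[OF True] unfolding canonizes_def by blast
qed (simp add: canon_child_perm_def permutes_id)

lemma canon_child_perm_cong: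
  assumes "layer X m b = layer X m b'"
  shows "canon_child_perm \<tau> X m p b = canon_child_perm \<tau> X m p b'"
  unfolding canon_child_perm_def canonizes_def assms ..

primrec canon_perm :: "enat \<Rightarrow> (nat \<Rightarrow> nat) \<Rightarrow> nat \<Rightarrow> (nat \<Rightarrow> nat) \<Rightarrow> nat \<Rightarrow> edges \<Rightarrow> nat \<Rightarrow> nat" where
  "canon_perm \<tau> X n \<sigma> 0 b = \<sigma>"
| "canon_perm \<tau> X n \<sigma> (Suc k) b = canon_child_perm \<tau> X (n + k) (canon_perm \<tau> X n \<sigma> k b) b"

lemma canon_perm_permutes:
  assumes "\<sigma> permutes {1..X n}"
  shows "canon_perm \<tau> X n \<sigma> k b permutes {1..X (n + k)}"
  using assms canon_child_perm_permutes by (cases k) simp_all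

lemma canon_perm_cong:
  assumes "\<And>j. j < k \<Longrightarrow> layer X (n + j) b = layer X (n + j) b'"
  shows "canon_perm \<tau> X n \<sigma> k b = canon_perm \<tau> X n \<sigma> k b'"
  using assms by (induction k) (auto intro: canon_child_perm_cong)

lemma canon_perm_edges_before:
  "n + k \<le> N \<Longrightarrow> canon_perm \<tau> X n \<sigma> k (edges_before X N b) = canon_perm \<tau> X n \<sigma> k b"
  by (rule canon_perm_cong) (simp add: layer_edges_before)

definition canon_genealogy :: "enat \<Rightarrow> (nat \<Rightarrow> nat) \<Rightarrow> nat \<Rightarrow> (nat \<Rightarrow> nat) \<Rightarrow> edges \<Rightarrow> edges" where
  "canon_genealogy \<tau> X n \<sigma> b =
     (\<Union>k. relabel_layer (canon_perm \<tau> X n \<sigma> k b) (canon_perm \<tau> X n \<sigma> (Suc k) b) (layer X (n + k) b))"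

lemma measurable_canon_genealogy: "canon_genealogy \<tau> X n \<sigma> \<in> edge_space \<rightarrow>\<^sub>M edge_space"
proof (rule measurable_edge_spaceI)
  fix e :: "vertex \<times> vertex"
  let ?N = "Suc (fst (fst e))"
  let ?A = "\<lambda>c k. relabel_layer (canon_perm \<tau> X n \<sigma> k c) (canon_perm \<tau> X n \<sigma> (Suc k) c) (layer X (n + k) c)"
  have mem: "e \<in> canon_genealogy \<tau> X n \<sigma> c \<longleftrightarrow> (\<exists>k. n + k = fst (fst e) \<and> e \<in> ?A c k)" for c
  proof
    assume "e \<in> canon_genealogy \<tau> X n \<sigma> c"
    then obtain k where "e \<in> ?A c k"
      unfolding canon_genealogy_def by blast
    with relabel_layer_level[OF this] show "\<exists>k. n + k = fst (fst e) \<and> e \<in> ?A c k"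
      by auto
  qed (auto simp: canon_genealogy_def)
  have "?A (edges_before X ?N b) k = ?A b k" if "n + k = fst (fst e)" for b k
    using that by (simp add: canon_perm_edges_before layer_edges_before del: canon_perm.simps)
  then have "e \<in> canon_genealogy \<tau> X n \<sigma> b \<longleftrightarrow> e \<in> canon_genealogy \<tau> X n \<sigma> (edges_before X ?N b)" for b
    unfolding mem by auto
  then show "\<exists>U. finite U \<and> (\<forall>b. e \<in> canon_genealogy \<tau> X n \<sigma> b \<longleftrightarrow> e \<in> canon_genealogy \<tau> X n \<sigma> (b \<inter> U))"
    unfolding edges_before_def by (intro exI[of _ "\<Union>m<?N. gen X m \<times> gen X (Suc m)"]) auto
qed

definition canon_relabel :: "enat \<Rightarrow> (nat \<Rightarrow> nat) \<Rightarrow> nat \<Rightarrow> (nat \<Rightarrow> nat) \<Rightarrow> edges \<Rightarrow> vertex \<Rightarrow> vertex" where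
  "canon_relabel \<tau> X n \<sigma> b = (\<lambda>(a, i). if n \<le> a then (a, canon_perm \<tau> X n \<sigma> (a - n) b i) else (a, i))"

lemma bij_canon_relabel:
  assumes "\<sigma> permutes {1..X n}"
  shows "bij (canon_relabel \<tau> X n \<sigma> b)"
proof -
  define g where "g = (\<lambda>(a, i). if n \<le> a then (a, inv (canon_perm \<tau> X n \<sigma> (a - n) b) i) else (a, i))"
  have p: "canon_perm \<tau> X n \<sigma> k b permutes {1..X (n + k)}" for k
    using canon_perm_permutes[of \<sigma> X n, OF assms] .
  have "canon_relabel \<tau> X n \<sigma> b (g v) = v" "g (canon_relabel \<tau> X n \<sigma> b v) = v" for v
    using permutes_inverses[OF p] by (cases v; simp add: canon_relabel_def g_def)+
  then show ?thesis
    by (intro o_bij[where g=g]) auto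
qed

lemma canon_relabel_layer_edge:
  "map_prod (canon_relabel \<tau> X n \<sigma> b) (canon_relabel \<tau> X n \<sigma> b) ((n + k, i), (Suc (n + k), j))
    = ((n + k, canon_perm \<tau> X n \<sigma> k b i), (Suc (n + k), canon_perm \<tau> X n \<sigma> (Suc k) b j))"
proof -
  have "Suc (n + k) - n = Suc k"
    by simp
  then show ?thesis
    unfolding canon_relabel_def by (simp del: canon_perm.simps)
qed

lemma canon_genealogy_eq_image:
  assumes b: "genealogy \<tau> X d b"
  shows "canon_genealogy \<tau> X n \<sigma> b
    = map_prod (canon_relabel \<tau> X n \<sigma> b) (canon_relabel \<tau> X n \<sigma> b) ` {e \<in> b. n \<le> fst (fst e)}"
proof
  let ?R = "canon_relabel \<tau> X n \<sigma> b"
  let ?A = "\<lambda>k. relabel_layer (canon_perm \<tau> X n \<sigma> k b) (canon_perm \<tau> X n \<sigma> (Suc k) b) (layer X (n + k) b)"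
  show "canon_genealogy \<tau> X n \<sigma> b \<subseteq> map_prod ?R ?R ` {e \<in> b. n \<le> fst (fst e)}"
  proof
    fix e assume "e \<in> canon_genealogy \<tau> X n \<sigma> b"
    then obtain k where "e \<in> ?A k"
      unfolding canon_genealogy_def by blast
    then obtain x where e: "e = map_prod (apsnd (canon_perm \<tau> X n \<sigma> k b)) (apsnd (canon_perm \<tau> X n \<sigma> (Suc k) b)) x"
        and "x \<in> layer X (n + k) b"
      unfolding relabel_layer_def by (rule imageE)
    then obtain i j where x: "x = ((n + k, i), (Suc (n + k), j))" "x \<in> b"
      unfolding layer_def gen_def by auto
    have "e = map_prod ?R ?R x"
      unfolding e x(1) canon_relabel_layer_edge by simp
    then show "e \<in> map_prod ?R ?R ` {e \<in> b. n \<le> fst (fst e)}"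
      using x by (intro image_eqI) auto
  qed
  show "map_prod ?R ?R ` {e \<in> b. n \<le> fst (fst e)} \<subseteq> canon_genealogy \<tau> X n \<sigma> b"
  proof
    fix e assume "e \<in> map_prod ?R ?R ` {e \<in> b. n \<le> fst (fst e)}"
    then obtain x where e: "e = map_prod ?R ?R x" and x: "x \<in> b" "n \<le> fst (fst x)"
      by (rule imageE) simp
    obtain m i j where "x = ((m, i), (Suc m, j))"
      using genealogy_edge[OF b x(1)] by blast
    with x obtain k where xk: "x = ((n + k, i), (Suc (n + k), j))"
      using le_Suc_ex by fastforce
    then have "x \<in> layer X (n + k) b"
      using x(1) genealogy_edge[OF b x(1)] unfolding layer_def by auto
    moreover have "e = map_prod (apsnd (canon_perm \<tau> X n \<sigma> k b)) (apsnd (canon_perm \<tau> X n \<sigma> (Suc k) b)) x"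
      unfolding e xk canon_relabel_layer_edge by simp
    ultimately have "e \<in> ?A k"
      unfolding relabel_layer_def by (rule rev_image_eqI)
    then show "e \<in> canon_genealogy \<tau> X n \<sigma> b"
      unfolding canon_genealogy_def by blast
  qed
qed

lemma permutes_gen_index:
  assumes "\<pi> permutes gen X n"
  shows "\<exists>\<sigma>. \<sigma> permutes {1..X n} \<and> (\<forall>i. \<pi> (n, \<sigma> i) = (n, i))"
proof -
  let ?\<rho> = "inv \<pi>"
  have \<rho>: "?\<rho> permutes gen X n"
    using permutes_inv[OF assms] .
  define \<sigma> where "\<sigma> i = snd (?\<rho> (n, i))" for i
  have \<rho>\<sigma>: "?\<rho> (n, i) = (n, \<sigma> i)" for i
  proof (cases "i \<in> {1..X n}")
    case True
    then show ?thesis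
      using permutes_in_image[OF \<rho>, of "(n, i)"] unfolding \<sigma>_def by (cases "?\<rho> (n, i)") auto
  next
    case False
    then show ?thesis
      using \<rho> unfolding \<sigma>_def permutes_def by auto
  qed
  have "inj_on \<sigma> {1..X n}"
    using \<rho>\<sigma> permutes_inj[OF \<rho>] by (metis injD inj_onI prod.inject)
  moreover have "\<sigma> i \<in> {1..X n}" if "i \<in> {1..X n}" for i
    using permutes_in_image[OF \<rho>, of "(n, i)"] \<rho>\<sigma>[of i] that by simp
  then have "\<sigma> ` {1..X n} \<subseteq> {1..X n}"
    by blast
  ultimately have "bij_betw \<sigma> {1..X n} {1..X n}"
    by (simp add: bij_betw_def endo_inj_surj)
  moreover have "\<sigma> i = i" if "i \<notin> {1..X n}" for i
    using permutes_not_in[OF \<rho>, of "(n, i)"] \<rho>\<sigma>[of i] that by simp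
  ultimately have "\<sigma> permutes {1..X n}"
    by (rule bij_imp_permutes)
  moreover have "\<pi> (n, \<sigma> i) = (n, i)" for i
    using \<rho>\<sigma>[of i, symmetric] permutes_inverses(1)[OF assms, of "(n, i)"] by simp
  ultimately show ?thesis
    by blast
qed

lemma tree_vec_canon_genealogy:
  assumes b: "genealogy \<tau> X d b" and \<pi>: "\<pi> permutes gen X n" and \<sigma>: "\<sigma> permutes {1..X n}"
    and \<pi>\<sigma>: "\<And>i. \<pi> (n, \<sigma> i) = (n, i)"
  shows "tree_vec X n (canon_genealogy \<tau> X n \<sigma> b) = tree_vec X n b \<circ> \<pi>"
proof
  fix v :: vertex
  show "tree_vec X n (canon_genealogy \<tau> X n \<sigma> b) v = (tree_vec X n b \<circ> \<pi>) v"
  proof (cases "v \<in> gen X n")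
    case True
    then obtain j where j: "v = (n, j)" "j \<in> {1..X n}"
      by (cases v) simp
    define i where "i = inv \<sigma> j"
    have v: "v = (n, \<sigma> i)"
      using permutes_inverses(1)[OF \<sigma>] j(1) by (simp add: i_def)
    have i: "i \<in> {1..X n}"
      using permutes_in_image[OF permutes_inv[OF \<sigma>]] j(2) by (simp add: i_def)
    let ?R = "canon_relabel \<tau> X n \<sigma> b"
    have "?R (n, i) = (n, \<sigma> i)"
      unfolding canon_relabel_def by simp
    moreover have "digraph_iso (subtree {e \<in> b. n \<le> fst (fst e)} (n, i))
        (subtree (map_prod ?R ?R ` {e \<in> b. n \<le> fst (fst e)}) (?R (n, i)))"
      by (rule subtree_map_prod_iso[OF bij_canon_relabel[of \<sigma> X n, OF \<sigma>]])
    moreover have "subtree {e \<in> b. n \<le> fst (fst e)} (n, i) = subtree b (n, i)"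
      by (rule subtree_restrict_levels[OF b]) simp
    ultimately have "digraph_iso (subtree b (n, i)) (subtree (canon_genealogy \<tau> X n \<sigma> b) (n, \<sigma> i))"
      unfolding canon_genealogy_eq_image[OF b] by simp
    moreover have "\<sigma> i \<in> {1..X n}"
      using permutes_in_image[OF \<sigma>] i by simp
    ultimately show ?thesis
      using i \<pi>\<sigma>[of i] unfolding v tree_vec_def by (simp add: iso_class_eq)
  next
    case False
    then show ?thesis
      using permutes_not_in[OF \<pi> False] unfolding tree_vec_def by simp
  qed
qed

definition canon_degrees :: "enat \<Rightarrow> (nat \<Rightarrow> nat) \<Rightarrow> nat \<Rightarrow> (nat \<Rightarrow> nat) \<Rightarrow> nat \<Rightarrow> edges \<Rightarrow> nat \<Rightarrow> nat" where
  "canon_degrees \<tau> X n \<sigma> k b = Kvec X (n + k) (layer X (n + k) b) \<circ> inv (canon_perm \<tau> X n \<sigma> k b)"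

definition canon_degree_list :: "enat \<Rightarrow> (nat \<Rightarrow> nat) \<Rightarrow> nat \<Rightarrow> (nat \<Rightarrow> nat) \<Rightarrow> nat \<Rightarrow> edges \<Rightarrow> (nat \<Rightarrow> nat) list" where
  "canon_degree_list \<tau> X n \<sigma> K b = map (\<lambda>k. canon_degrees \<tau> X n \<sigma> k b) [0..<K]"

lemma canon_degree_list_edges_before:
  assumes "n + K \<le> N"
  shows "canon_degree_list \<tau> X n \<sigma> K (edges_before X N b) = canon_degree_list \<tau> X n \<sigma> K b"
  using assms unfolding canon_degree_list_def canon_degrees_def
  by (simp add: canon_perm_edges_before layer_edges_before del: canon_perm.simps)

lemma canon_degree_list_Suc:
  assumes "genealogy \<tau> X d b"
  shows "canon_degree_list \<tau> X n \<sigma> (Suc K) b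
    = canon_degree_list \<tau> X n \<sigma> K (edges_before X (n + K) b)
      @ [Kvec X (n + K) b \<circ> inv (canon_perm \<tau> X n \<sigma> K (edges_before X (n + K) b))]"
  unfolding canon_degree_list_edges_before[OF order_refl] canon_perm_edges_before[OF order_refl]
  by (simp add: canon_degree_list_def canon_degrees_def genealogy_Kvec_layer[OF assms]
      del: canon_perm.simps)

lemma subset_canon_genealogy_iff:
  assumes "genealogy \<tau> X d b" and "\<sigma> permutes {1..X n}" and F: "\<forall>e\<in>F. fst (fst e) < n + K"
  shows "F \<subseteq> canon_genealogy \<tau> X n \<sigma> b
    \<longleftrightarrow> F \<subseteq> (\<Union>k<K. canon_layer \<tau> X (n + k) (canon_degree_list \<tau> X n \<sigma> K b ! k))"
proof -
  let ?A = "\<lambda>k. relabel_layer (canon_perm \<tau> X n \<sigma> k b) (canon_perm \<tau> X n \<sigma> (Suc k) b) (layer X (n + k) b)"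
  have "?A k = canon_layer \<tau> X (n + k) (canon_degree_list \<tau> X n \<sigma> K b ! k)" if "k < K" for k
    using canon_child_perm_canonizes[OF canonizes_exists[OF assms(1) canon_perm_permutes[of \<sigma> X n, OF assms(2)]]] that
    unfolding canonizes_def canon_degree_list_def canon_degrees_def by simp
  moreover have "F \<subseteq> (\<Union>k. ?A k) \<longleftrightarrow> F \<subseteq> (\<Union>k<K. ?A k)"
    using F by (fastforce dest: relabel_layer_level)
  ultimately show ?thesis
    unfolding canon_genealogy_def by simp
qed

section \<open>The law of the canonical genealogy\<close>

lemma (in finite_measure) measure_eq_sum_values:
  assumes "finite A" and "\<And>x. x \<in> space M \<Longrightarrow> f x \<in> A"
    and "\<And>a. a \<in> A \<Longrightarrow> {x \<in> space M. f x = a} \<in> sets M"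
  shows "measure M {x \<in> space M. P (f x)} = (\<Sum>a\<in>A. if P a then measure M {x \<in> space M. f x = a} else 0)"
proof -
  have "{x \<in> space M. P (f x)} = (\<Union>a\<in>{a \<in> A. P a}. {x \<in> space M. f x = a})"
    using assms(2) by auto
  then have "measure M {x \<in> space M. P (f x)} = (\<Sum>a\<in>{a \<in> A. P a}. measure M {x \<in> space M. f x = a})"
    using assms by (auto intro!: finite_measure_finite_Union simp: disjoint_family_on_def)
  then show ?thesis
    using assms(1) by (simp add: sum.inter_filter)
qed

(* Relabelling an exchangeable K by a bijection that depends on an independent W leaves the
   joint law of (W, K) unchanged. *)
lemma (in prob_space) prob_independent_exchangeable_relabel:
  assumes SS: "finite SS" "\<And>\<omega>. \<omega> \<in> space M \<Longrightarrow> W \<omega> \<in> SS"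
    and V: "finite V" "\<And>\<omega>. \<omega> \<in> space M \<Longrightarrow> K \<omega> \<in> V"
    and events: "\<And>S \<kappa>. {\<omega> \<in> space M. W \<omega> = S \<and> K \<omega> = \<kappa>} \<in> events"
    and indep: "\<And>S \<kappa>. prob {\<omega> \<in> space M. W \<omega> = S \<and> K \<omega> = \<kappa>}
      = prob {\<omega> \<in> space M. K \<omega> = \<kappa>} * prob {\<omega> \<in> space M. W \<omega> = S}"
    and bij: "\<And>S. bij_betw (\<phi> S) V V"
    and exch: "\<And>S \<kappa>. prob {\<omega> \<in> space M. K \<omega> = \<phi> S \<kappa>} = prob {\<omega> \<in> space M. K \<omega> = \<kappa>}"
  shows "prob {\<omega> \<in> space M. P (W \<omega>) (\<phi> (W \<omega>) (K \<omega>))}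
    = (\<Sum>\<kappa>\<in>V. prob {\<omega> \<in> space M. K \<omega> = \<kappa>} * prob {\<omega> \<in> space M. P (W \<omega>) \<kappa>})"
proof -
  let ?pK = "\<lambda>\<kappa>. prob {\<omega> \<in> space M. K \<omega> = \<kappa>}" and ?pW = "\<lambda>S. prob {\<omega> \<in> space M. W \<omega> = S}"
  have joint: "prob {\<omega> \<in> space M. Q (W \<omega>) (K \<omega>)}
      = (\<Sum>S\<in>SS. \<Sum>\<kappa>\<in>V. if Q S \<kappa> then ?pK \<kappa> * ?pW S else 0)" for Q
  proof -
    have "prob {\<omega> \<in> space M. case_prod Q (W \<omega>, K \<omega>)}
        = (\<Sum>a\<in>SS \<times> V. if case_prod Q a then prob {\<omega> \<in> space M. (W \<omega>, K \<omega>) = a} else 0)"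
      using SS V events by (intro measure_eq_sum_values) auto
    also have "\<dots> = (\<Sum>(S, \<kappa>)\<in>SS \<times> V. if Q S \<kappa> then ?pK \<kappa> * ?pW S else 0)"
      by (rule sum.cong) (auto simp: indep)
    finally show ?thesis
      by (simp add: sum.cartesian_product)
  qed
  have marginal: "prob {\<omega> \<in> space M. R (W \<omega>)} = (\<Sum>S\<in>SS. if R S then ?pW S else 0)" for R
  proof (rule measure_eq_sum_values[OF SS])
    fix S
    have "{\<omega> \<in> space M. W \<omega> = S} = (\<Union>\<kappa>\<in>V. {\<omega> \<in> space M. W \<omega> = S \<and> K \<omega> = \<kappa>})"
      using V(2) by auto
    then show "{\<omega> \<in> space M. W \<omega> = S} \<in> events"
      using V(1) events by auto
  qed
  have "prob {\<omega> \<in> space M. P (W \<omega>) (\<phi> (W \<omega>) (K \<omega>))}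
      = (\<Sum>S\<in>SS. \<Sum>\<kappa>\<in>V. if P S (\<phi> S \<kappa>) then ?pK \<kappa> * ?pW S else 0)"
    by (rule joint)
  also have "\<dots> = (\<Sum>S\<in>SS. \<Sum>\<kappa>\<in>V. if P S (\<phi> S \<kappa>) then ?pK (\<phi> S \<kappa>) * ?pW S else 0)"
    by (simp only: exch)
  also have "\<dots> = (\<Sum>S\<in>SS. \<Sum>\<kappa>\<in>V. if P S \<kappa> then ?pK \<kappa> * ?pW S else 0)"
    using sum.reindex_bij_betw[OF bij, where g="\<lambda>\<kappa>. if P _ \<kappa> then ?pK \<kappa> * ?pW _ else 0"] by simp
  also have "\<dots> = (\<Sum>\<kappa>\<in>V. ?pK \<kappa> * (\<Sum>S\<in>SS. if P S \<kappa> then ?pW S else 0))"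
    by (subst sum.swap) (simp add: sum_distrib_left if_distrib cong: if_cong)
  also have "\<dots> = (\<Sum>\<kappa>\<in>V. ?pK \<kappa> * prob {\<omega> \<in> space M. P (W \<omega>) \<kappa>})"
    using marginal[of "\<lambda>S. P S _"] by simp
  finally show ?thesis .
qed

definition degree_vectors :: "(nat \<Rightarrow> nat) \<Rightarrow> nat \<Rightarrow> (nat \<Rightarrow> nat) set" where
  "degree_vectors X m = {\<kappa>. \<forall>i. (i \<in> {1..X m} \<longrightarrow> \<kappa> i \<in> {0..X (Suc m)}) \<and> (i \<notin> {1..X m} \<longrightarrow> \<kappa> i = 0)}"

lemma finite_degree_vectors: "finite (degree_vectors X m)"
  unfolding degree_vectors_def by (intro finite_set_of_finite_funs) auto

lemma bij_betw_degree_vectors_permute: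
  assumes "p permutes {1..X m}"
  shows "bij_betw (\<lambda>\<kappa>. \<kappa> \<circ> p) (degree_vectors X m) (degree_vectors X m)"
proof -
  have closed: "\<kappa> \<circ> q \<in> degree_vectors X m" if "q permutes {1..X m}" "\<kappa> \<in> degree_vectors X m" for q \<kappa>
    using that permutes_in_image[OF that(1)] permutes_not_in[OF that(1)]
    unfolding degree_vectors_def by auto
  show ?thesis
  proof (rule bij_betw_byWitness[where f'="\<lambda>\<kappa>. \<kappa> \<circ> inv p"])
    show "\<forall>\<kappa>\<in>degree_vectors X m. \<kappa> \<circ> p \<circ> inv p = \<kappa>" "\<forall>\<kappa>\<in>degree_vectors X m. \<kappa> \<circ> inv p \<circ> p = \<kappa>"
      using permutes_inv_o[OF assms] by (simp_all add: comp_assoc)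
  qed (use closed assms permutes_inv[OF assms] in auto)
qed

lemma genealogy_Kvec_degree_vectors:
  assumes "genealogy \<tau> X d b"
  shows "Kvec X m b \<in> degree_vectors X m"
proof -
  have "outdeg b (m, i) \<le> X (Suc m)" for i
  proof -
    have "{w. ((m, i), w) \<in> b} \<subseteq> gen X (Suc m)"
      by (auto elim: genealogy_edge[OF assms])
    then have "outdeg b (m, i) \<le> card (gen X (Suc m))"
      unfolding outdeg_def by (intro card_mono) auto
    then show ?thesis
      by simp
  qed
  then show ?thesis
    unfolding degree_vectors_def Kvec_def by auto
qed

locale forward_neutral_genealogy =
  fixes M :: "'w measure" and \<tau> :: enat and X :: "nat \<Rightarrow> nat" and d :: "nat \<Rightarrow> nat \<Rightarrow> nat"
    and E :: "'w \<Rightarrow> edges"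
  assumes prob: "prob_space M"
    and measurable_E: "E \<in> M \<rightarrow>\<^sub>M edge_space"
    and genealogy_E: "\<And>\<omega>. \<omega> \<in> space M \<Longrightarrow> genealogy \<tau> X d (E \<omega>)"
    and neutral: "forward_neutral M \<tau> X E"
begin

sublocale prob_space M
  by (rule prob)

lemma measurable_canon_genealogy_E: "(\<lambda>\<omega>. canon_genealogy \<tau> X n \<sigma> (E \<omega>)) \<in> M \<rightarrow>\<^sub>M edge_space"
  using measurable_comp[OF measurable_E measurable_canon_genealogy] by (simp add: comp_def)

lemma Kvec_beyond:
  assumes "\<not> enat N < \<tau>" and "\<omega> \<in> space M"
  shows "Kvec X N (E \<omega>) = (\<lambda>_. 0)"
proof -
  have "\<not> enat (Suc N) < \<tau>"
    using assms(1) by (meson Suc_ile_eq less_imp_le order_le_less_trans)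
  then show ?thesis
    by (rule genealogy_Kvec_beyond[OF genealogy_E[OF assms(2)]])
qed

lemma events_edges_before: "{\<omega> \<in> space M. P (edges_before X N (E \<omega>))} \<in> events"
proof -
  let ?U = "\<Union>m<N. gen X m \<times> gen X (Suc m)"
  have "{\<omega> \<in> space M. P (edges_before X N (E \<omega>))} = E -` {b. P (b \<inter> ?U)} \<inter> space M"
    unfolding edges_before_def by auto
  also have "\<dots> \<in> events"
    using measurable_sets[OF measurable_E sets_edge_space_finitely_determined] by simp
  finally show ?thesis .
qed

lemma events_Kvec_edges_before:
  "{\<omega> \<in> space M. edges_before X N (E \<omega>) = S \<and> Kvec X N (E \<omega>) = \<kappa>} \<in> events"
proof -
  have "Kvec X N (E \<omega>) = Kvec X N (layer X N (edges_before X (Suc N) (E \<omega>)))"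
    if "\<omega> \<in> space M" for \<omega>
    using genealogy_Kvec_layer[OF genealogy_E[OF that]] by (simp add: layer_edges_before)
  moreover have "edges_before X N (E \<omega>) = edges_before X N (edges_before X (Suc N) (E \<omega>))" for \<omega>
    by (auto simp: edges_before_def)
  ultimately have "{\<omega> \<in> space M. edges_before X N (E \<omega>) = S \<and> Kvec X N (E \<omega>) = \<kappa>}
      = {\<omega> \<in> space M. (\<lambda>b. edges_before X N b = S \<and> Kvec X N (layer X N b) = \<kappa>)
          (edges_before X (Suc N) (E \<omega>))}"
    by auto
  then show ?thesis
    using events_edges_before by simp
qed

lemma Kvec_exchangeable:
  assumes p: "p permutes {1..X N}"
  shows "prob {\<omega> \<in> space M. Kvec X N (E \<omega>) = \<kappa> \<circ> p} = prob {\<omega> \<in> space M. Kvec X N (E \<omega>) = \<kappa>}"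
proof (cases "enat N < \<tau>")
  case True
  have "prob {\<omega> \<in> space M. Kvec X N (E \<omega>) = \<kappa>}
      = prob {\<omega> \<in> space M. (\<lambda>i. Kvec X N (E \<omega>) (inv p i)) = \<kappa>}"
    using neutral True permutes_inv[OF p] unfolding forward_neutral_def by blast
  moreover have "(\<lambda>i. K (inv p i)) = \<kappa> \<longleftrightarrow> K = \<kappa> \<circ> p" for K :: "nat \<Rightarrow> nat"
  proof
    assume "(\<lambda>i. K (inv p i)) = \<kappa>"
    then have "\<kappa> \<circ> p = (\<lambda>i. K (inv p (p i)))"
      by auto
    then show "K = \<kappa> \<circ> p"
      using permutes_inverses(2)[OF p] by simp
  qed (use permutes_inverses(1)[OF p] in auto)
  ultimately show ?thesis
    by simp
next
  case False
  have "\<kappa> \<circ> p = (\<lambda>_. 0) \<longleftrightarrow> \<kappa> = (\<lambda>_. 0)"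
    using permutes_surj[OF p] by (metis comp_apply fun_eq_iff surj_def)
  then show ?thesis
    using Kvec_beyond[OF False] by (auto intro!: arg_cong[where f=prob])
qed

lemma Kvec_independent:
  "prob {\<omega> \<in> space M. edges_before X N (E \<omega>) = S \<and> Kvec X N (E \<omega>) = \<kappa>}
    = prob {\<omega> \<in> space M. Kvec X N (E \<omega>) = \<kappa>} * prob {\<omega> \<in> space M. edges_before X N (E \<omega>) = S}"
proof (cases "enat N < \<tau>")
  case True
  then show ?thesis
    using neutral unfolding forward_neutral_def by (simp add: conj_commute)
next
  case False
  then have "{\<omega> \<in> space M. edges_before X N (E \<omega>) = S \<and> Kvec X N (E \<omega>) = \<kappa>}
      = (if \<kappa> = (\<lambda>_. 0) then {\<omega> \<in> space M. edges_before X N (E \<omega>) = S} else {})"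
    and "{\<omega> \<in> space M. Kvec X N (E \<omega>) = \<kappa>} = (if \<kappa> = (\<lambda>_. 0) then space M else {})"
    using Kvec_beyond by auto
  then show ?thesis
    by (simp add: prob_space)
qed

lemma canon_degree_list_Suc_law:
  assumes \<sigma>: "\<sigma> permutes {1..X n}"
  shows "prob {\<omega> \<in> space M. Q (canon_degree_list \<tau> X n \<sigma> (Suc K) (E \<omega>))}
    = (\<Sum>\<kappa>\<in>degree_vectors X (n + K). prob {\<omega> \<in> space M. Kvec X (n + K) (E \<omega>) = \<kappa>}
        * prob {\<omega> \<in> space M. Q (canon_degree_list \<tau> X n \<sigma> K (E \<omega>) @ [\<kappa>])})"
proof -
  let ?N = "n + K"
  let ?W = "\<lambda>\<omega>. edges_before X ?N (E \<omega>)"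
  let ?\<rho> = "\<lambda>S. canon_perm \<tau> X n \<sigma> K S"
  have \<rho>: "inv (?\<rho> S) permutes {1..X ?N}" for S
    using permutes_inv[OF canon_perm_permutes[of \<sigma> X n, OF \<sigma>]] .
  have "prob {\<omega> \<in> space M. Q (canon_degree_list \<tau> X n \<sigma> (Suc K) (E \<omega>))}
      = prob {\<omega> \<in> space M. (\<lambda>S \<kappa>. Q (canon_degree_list \<tau> X n \<sigma> K S @ [\<kappa>]))
          (?W \<omega>) ((\<lambda>S \<kappa>. \<kappa> \<circ> inv (?\<rho> S)) (?W \<omega>) (Kvec X ?N (E \<omega>)))}"
    using canon_degree_list_Suc[OF genealogy_E] by (intro arg_cong[where f=prob]) auto
  also have "\<dots> = (\<Sum>\<kappa>\<in>degree_vectors X ?N. prob {\<omega> \<in> space M. Kvec X ?N (E \<omega>) = \<kappa>}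
      * prob {\<omega> \<in> space M. Q (canon_degree_list \<tau> X n \<sigma> K (?W \<omega>) @ [\<kappa>])})"
  proof (rule prob_independent_exchangeable_relabel)
    show "finite (Pow (\<Union>m<?N. gen X m \<times> gen X (Suc m)))"
      by simp
    show "?W \<omega> \<in> Pow (\<Union>m<?N. gen X m \<times> gen X (Suc m))" for \<omega>
      unfolding edges_before_def by blast
    show "Kvec X ?N (E \<omega>) \<in> degree_vectors X ?N" if "\<omega> \<in> space M" for \<omega>
      using genealogy_Kvec_degree_vectors[OF genealogy_E[OF that]] .
    show "bij_betw (\<lambda>\<kappa>. \<kappa> \<circ> inv (?\<rho> S)) (degree_vectors X ?N) (degree_vectors X ?N)" for S
      using bij_betw_degree_vectors_permute[of _ X "n + K", OF \<rho>] .
    show "prob {\<omega> \<in> space M. Kvec X ?N (E \<omega>) = \<kappa> \<circ> inv (?\<rho> S)} = prob {\<omega> \<in> space M. Kvec X ?N (E \<omega>) = \<kappa>}"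
      for S \<kappa>
      using Kvec_exchangeable[of _ "n + K", OF \<rho>] .
  qed (simp_all add: finite_degree_vectors events_Kvec_edges_before Kvec_independent)
  also have "\<dots> = (\<Sum>\<kappa>\<in>degree_vectors X ?N. prob {\<omega> \<in> space M. Kvec X ?N (E \<omega>) = \<kappa>}
      * prob {\<omega> \<in> space M. Q (canon_degree_list \<tau> X n \<sigma> K (E \<omega>) @ [\<kappa>])})"
    by (simp add: canon_degree_list_edges_before)
  finally show ?thesis .
qed

lemma canon_degree_list_law:
  assumes "\<sigma>\<^sub>1 permutes {1..X n}" and "\<sigma>\<^sub>2 permutes {1..X n}"
  shows "prob {\<omega> \<in> space M. Q (canon_degree_list \<tau> X n \<sigma>\<^sub>1 K (E \<omega>))}
    = prob {\<omega> \<in> space M. Q (canon_degree_list \<tau> X n \<sigma>\<^sub>2 K (E \<omega>))}"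
proof (induction K arbitrary: Q)
  case 0
  then show ?case
    by (simp add: canon_degree_list_def)
next
  case (Suc K)
  show ?case
    unfolding canon_degree_list_Suc_law[OF assms(1)] canon_degree_list_Suc_law[OF assms(2)]
    using Suc.IH[of "\<lambda>ds. Q (ds @ [_])"] by simp
qed

lemma canon_genealogy_law:
  assumes \<sigma>\<^sub>1: "\<sigma>\<^sub>1 permutes {1..X n}" and \<sigma>\<^sub>2: "\<sigma>\<^sub>2 permutes {1..X n}"
  shows "distr M edge_space (\<lambda>\<omega>. canon_genealogy \<tau> X n \<sigma>\<^sub>1 (E \<omega>))
    = distr M edge_space (\<lambda>\<omega>. canon_genealogy \<tau> X n \<sigma>\<^sub>2 (E \<omega>))"
proof (rule edge_space_eqI)
  show "prob_space (distr M edge_space (\<lambda>\<omega>. canon_genealogy \<tau> X n \<sigma>\<^sub>1 (E \<omega>)))"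
    "prob_space (distr M edge_space (\<lambda>\<omega>. canon_genealogy \<tau> X n \<sigma>\<^sub>2 (E \<omega>)))"
    using measurable_canon_genealogy_E by (simp_all add: prob_space_distr)
  fix F :: edges
  assume "finite F"
  then obtain K where K: "\<forall>e\<in>F. fst (fst e) < n + K"
    using finite_nat_set_iff_bounded[of "(\<lambda>e. fst (fst e)) ` F"] by (auto intro: trans_less_add2)
  have cylinder: "measure (distr M edge_space (\<lambda>\<omega>. canon_genealogy \<tau> X n \<sigma> (E \<omega>))) {b. F \<subseteq> b}
      = prob {\<omega> \<in> space M. F \<subseteq> (\<Union>k<K. canon_layer \<tau> X (n + k) (canon_degree_list \<tau> X n \<sigma> K (E \<omega>) ! k))}"
    if \<sigma>: "\<sigma> permutes {1..X n}" for \<sigma>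
  proof -
    have "{b. F \<subseteq> b} \<in> sets edge_space"
      using sets_edge_space_finitely_determined[OF \<open>finite F\<close>, of "\<lambda>c. F \<subseteq> c"] by simp
    then have "measure (distr M edge_space (\<lambda>\<omega>. canon_genealogy \<tau> X n \<sigma> (E \<omega>))) {b. F \<subseteq> b}
        = prob {\<omega> \<in> space M. F \<subseteq> canon_genealogy \<tau> X n \<sigma> (E \<omega>)}"
      using measure_distr[OF measurable_canon_genealogy_E] by (simp add: vimage_def Int_def conj_commute)
    also have "{\<omega> \<in> space M. F \<subseteq> canon_genealogy \<tau> X n \<sigma> (E \<omega>)}
        = {\<omega> \<in> space M. F \<subseteq> (\<Union>k<K. canon_layer \<tau> X (n + k) (canon_degree_list \<tau> X n \<sigma> K (E \<omega>) ! k))}"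
      using subset_canon_genealogy_iff[OF genealogy_E \<sigma> K] by blast
    finally show ?thesis .
  qed
  then show "measure (distr M edge_space (\<lambda>\<omega>. canon_genealogy \<tau> X n \<sigma>\<^sub>1 (E \<omega>))) {b. F \<subseteq> b}
      = measure (distr M edge_space (\<lambda>\<omega>. canon_genealogy \<tau> X n \<sigma>\<^sub>2 (E \<omega>))) {b. F \<subseteq> b}"
    unfolding cylinder[OF \<sigma>\<^sub>1] cylinder[OF \<sigma>\<^sub>2]
    using canon_degree_list_law[OF \<sigma>\<^sub>1 \<sigma>\<^sub>2, of "\<lambda>ds. F \<subseteq> (\<Union>k<K. canon_layer \<tau> X (n + k) (ds ! k))"]
    by simp
qed simp_all

lemma prob_canon_genealogy_eq:
  assumes "\<sigma>\<^sub>1 permutes {1..X n}" and "\<sigma>\<^sub>2 permutes {1..X n}" and "B \<in> sets edge_space"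
  shows "prob {\<omega> \<in> space M. canon_genealogy \<tau> X n \<sigma>\<^sub>1 (E \<omega>) \<in> B}
    = prob {\<omega> \<in> space M. canon_genealogy \<tau> X n \<sigma>\<^sub>2 (E \<omega>) \<in> B}"
proof -
  have "prob {\<omega> \<in> space M. canon_genealogy \<tau> X n \<sigma> (E \<omega>) \<in> B}
      = measure (distr M edge_space (\<lambda>\<omega>. canon_genealogy \<tau> X n \<sigma> (E \<omega>))) B" for \<sigma>
    using assms(3) measurable_canon_genealogy_E by (simp add: measure_distr vimage_def Int_def conj_commute)
  then show ?thesis
    using canon_genealogy_law[OF assms(1,2)] by simp
qed

end

theorem proposition3p4:
  fixes M :: "'w measure" and \<tau> :: enat and X :: "nat \<Rightarrow> nat"
    and k :: "nat \<Rightarrow> nat \<Rightarrow> nat" and \<E> :: "'w \<Rightarrow> edges"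
  assumes "prob_space M"
    and "\<And>n. enat n < \<tau> \<Longrightarrow> X n \<ge> 1"
    and "\<And>n. enat (Suc n) < \<tau> \<Longrightarrow> (\<Sum>i\<in>{1..X n}. k n i) = X (Suc n)"
    and "\<E> \<in> measurable M edge_space"
    and "\<And>\<omega>. \<omega> \<in> space M \<Longrightarrow> genealogy \<tau> X k (\<E> \<omega>)"
    and "forward_neutral M \<tau> X \<E>"
    and "enat n < \<tau>"
  shows "exchangeable_vec M edge_space (gen X n) (tree_vec X n) \<E>"
proof -
  interpret forward_neutral_genealogy M \<tau> X k \<E>
    using assms(1,4,5,6) by (rule forward_neutral_genealogy.intro)
  show ?thesis
    unfolding exchangeable_vec_def
  proof (intro allI impI)
    fix \<pi> A
    assume \<pi>: "\<pi> permutes gen X n" and A: "{b \<in> space edge_space. tree_vec X n b \<in> A} \<in> sets edge_space"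
    obtain \<sigma> where \<sigma>: "\<sigma> permutes {1..X n}" "\<And>i. \<pi> (n, \<sigma> i) = (n, i)"
      using permutes_gen_index[OF \<pi>] by blast
    let ?B = "{b. tree_vec X n b \<in> A}"
    have B: "?B \<in> sets edge_space"
      using A by simp
    have "prob {\<omega> \<in> space M. tree_vec X n (\<E> \<omega>) \<in> A}
        = prob {\<omega> \<in> space M. canon_genealogy \<tau> X n id (\<E> \<omega>) \<in> ?B}"
      using tree_vec_canon_genealogy[OF genealogy_E permutes_id permutes_id]
      by (auto intro!: arg_cong[where f=prob])
    also have "\<dots> = prob {\<omega> \<in> space M. canon_genealogy \<tau> X n \<sigma> (\<E> \<omega>) \<in> ?B}"
      by (rule prob_canon_genealogy_eq[OF permutes_id \<sigma>(1) B])
    also have "\<dots> = prob {\<omega> \<in> space M. (\<lambda>v. tree_vec X n (\<E> \<omega>) (\<pi> v)) \<in> A}"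
      using tree_vec_canon_genealogy[OF genealogy_E \<pi> \<sigma>] by (auto intro!: arg_cong[where f=prob] simp: comp_def)
    finally show "prob {\<omega> \<in> space M. tree_vec X n (\<E> \<omega>) \<in> A}
        = prob {\<omega> \<in> space M. (\<lambda>v. tree_vec X n (\<E> \<omega>) (\<pi> v)) \<in> A}" .
  qed
qed

end
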